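(* Let $n\ge 1$, $N=\{1,\dots,n\}$, $A=[0,1]$, and let $f$ be an OWA mechanism with weights $w_1,\dots,w_n\in[0,1]$, $\sum_j w_j=1$. Then $f$ satisfies individual fair share (IFS) if and only if $w_1 \ge \frac1n$ and $w_n \ge \frac1n$.
   Context: A mechanism is a map $f:A^n\to A$ from profiles $x=(x_i)_{i\in N}$ of reported locations to a facility location. An OWA mechanism with weights $w_1,\dots,w_n$ returns $f(x)=\sum_{j=1}^n w_j x_{\pi(j)}$, where $\pi$ is a permutation of $N$ with $x_{\pi(1)}\le\dots\le x_{\pi(n)}$. The mechanism $f$ satisfies IFS if for every profile $x\in A^n$ and every $i\in N$, $|x_i - f(x)| \le 1-\frac1n$. *)

theory Defs
  imports "HOL-Analysis.Analysis"
begin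

text \<open>Agents are N = {0..<n} (0-based), profiles are x :: nat => real.
  Weights w_1..w_n are indexed 1..n. The OWA mechanism returns
  sum_{j=1..n} w_j * x_(pi j), where x_(pi 1) <= ... <= x_(pi n) is the
  sorted profile (the j-th order statistic, independent of tie-breaking).\<close>

definition owa :: "nat \<Rightarrow> (nat \<Rightarrow> real) \<Rightarrow> (nat \<Rightarrow> real) \<Rightarrow> real" where
  "owa n w x = (\<Sum>j=1..n. w j * (sort (map x [0..<n])) ! (j - 1))"

definition IFS :: "nat \<Rightarrow> ((nat \<Rightarrow> real) \<Rightarrow> real) \<Rightarrow> bool" where
  "IFS n f \<longleftrightarrow> (\<forall>x. (\<forall>i<n. x i \<in> {0..1}) \<longrightarrow>
      (\<forall>i<n. \<bar>x i - f x\<bar> \<le> 1 - 1 / real n))"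

end

theory Submission
  imports Defs
begin

text \<open>Let \<open>s\<^sub>1 \<le> \<dots> \<le> s\<^sub>n\<close> be the sorted profile. The gap \<open>s\<^sub>n - f x = \<Sum>\<^sub>j w\<^sub>j (s\<^sub>n - s\<^sub>j)\<close>
  has a vanishing term \<open>j = n\<close> and all other terms at most \<open>w\<^sub>j\<close>, so it is at most \<open>1 - w\<^sub>n\<close>;
  symmetrically \<open>f x - s\<^sub>1 \<le> 1 - w\<^sub>1\<close>. As every agent lies between \<open>s\<^sub>1\<close> and \<open>s\<^sub>n\<close>, the two
  weight conditions suffice. Conversely, an agent alone at 0 among agents at 1 gets the
  outcome \<open>1 - w\<^sub>1\<close>, and an agent alone at 1 among agents at 0 gets \<open>w\<^sub>n\<close>.\<close>

lemma weighted_sum_le_with_zero_term: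
  fixes w v :: "'a \<Rightarrow> real"
  assumes "finite A" "k \<in> A" "v k = 0"
    and "\<And>j. j \<in> A \<Longrightarrow> 0 \<le> w j" "\<And>j. j \<in> A \<Longrightarrow> v j \<le> d"
    and "sum w A = 1"
  shows "(\<Sum>j\<in>A. w j * v j) \<le> d * (1 - w k)"
proof -
  have "(\<Sum>j\<in>A. w j * v j) = (\<Sum>j\<in>A - {k}. w j * v j)"
    using assms(1-3) by (simp add: sum.remove)
  also have "\<dots> \<le> (\<Sum>j\<in>A - {k}. w j * d)"
    using assms(4,5) by (intro sum_mono mult_left_mono) auto
  also have "\<dots> = d * (\<Sum>j\<in>A - {k}. w j)"
    by (simp add: sum_distrib_left mult.commute)
  also have "\<dots> = d * (1 - w k)"
    using assms(1,2,6) by (simp add: sum_diff1)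
  finally show ?thesis .
qed

lemma sorted_weighted_sum_bounds:
  fixes s :: "real list"
  assumes "sorted s" "length s = n" "n \<ge> 1"
    and w_nonneg: "\<And>j. j \<in> {1..n} \<Longrightarrow> 0 \<le> w j"
    and w_sum: "(\<Sum>j=1..n. w j) = 1"
  shows "s ! (n - 1) - (\<Sum>j=1..n. w j * s ! (j - 1)) \<le> (s ! (n - 1) - s ! 0) * (1 - w n)"
    and "(\<Sum>j=1..n. w j * s ! (j - 1)) - s ! 0 \<le> (s ! (n - 1) - s ! 0) * (1 - w 1)"
proof -
  have mono: "s ! j \<le> s ! k" if "j \<le> k" "k < n" for j k
    using assms(1,2) that by (simp add: sorted_nth_mono)
  have "s ! (n - 1) - (\<Sum>j=1..n. w j * s ! (j - 1))
      = (\<Sum>j=1..n. w j * (s ! (n - 1) - s ! (j - 1)))"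
    using w_sum by (simp add: right_diff_distrib sum_subtractf sum_distrib_right[symmetric])
  also have "\<dots> \<le> (s ! (n - 1) - s ! 0) * (1 - w n)"
    using \<open>n \<ge> 1\<close> mono w_nonneg w_sum by (intro weighted_sum_le_with_zero_term) auto
  finally show "s ! (n - 1) - (\<Sum>j=1..n. w j * s ! (j - 1)) \<le> (s ! (n - 1) - s ! 0) * (1 - w n)" .
  have "(\<Sum>j=1..n. w j * s ! (j - 1)) - s ! 0 = (\<Sum>j=1..n. w j * (s ! (j - 1) - s ! 0))"
    using w_sum by (simp add: right_diff_distrib sum_subtractf sum_distrib_right[symmetric])
  also have "\<dots> \<le> (s ! (n - 1) - s ! 0) * (1 - w 1)"
    using \<open>n \<ge> 1\<close> mono w_nonneg w_sum by (intro weighted_sum_le_with_zero_term) auto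
  finally show "(\<Sum>j=1..n. w j * s ! (j - 1)) - s ! 0 \<le> (s ! (n - 1) - s ! 0) * (1 - w 1)" .
qed

lemma owa_deviation_bounds:
  assumes "n \<ge> 1"
    and w_nonneg: "\<And>j. j \<in> {1..n} \<Longrightarrow> 0 \<le> w j"
    and w_sum: "(\<Sum>j=1..n. w j) = 1"
    and x: "\<forall>i<n. x i \<in> {0..1}" and "i < n"
  shows "x i - owa n w x \<le> 1 - w n" and "owa n w x - x i \<le> 1 - w 1"
proof -
  define s where "s = sort (map x [0..<n])"
  have len: "length s = n" and "sorted s" and set_s: "set s = x ` {0..<n}"
    by (simp_all add: s_def)
  have owa_s: "owa n w x = (\<Sum>j=1..n. w j * s ! (j - 1))"
    by (simp add: owa_def s_def)
  have "x i \<in> set s"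
    using \<open>i < n\<close> set_s by auto
  then obtain k where "k < n" "x i = s ! k"
    using len by (auto simp: in_set_conv_nth)
  then have x_between: "s ! 0 \<le> x i" "x i \<le> s ! (n - 1)"
    using \<open>sorted s\<close> len by (simp_all add: sorted_nth_mono)
  have "s ! 0 \<in> {0..1}" "s ! (n - 1) \<in> {0..1}"
    using \<open>n \<ge> 1\<close> len set_s x nth_mem[of 0 s] nth_mem[of "n - 1" s] by auto
  moreover have "s ! 0 \<le> s ! (n - 1)"
    using x_between by linarith
  ultimately have spread: "0 \<le> s ! (n - 1) - s ! 0" "s ! (n - 1) - s ! 0 \<le> 1"
    by auto
  have weights_le: "0 \<le> 1 - w k" if "k \<in> {1..n}" for k
    using member_le_sum[of k "{1..n}" w] w_nonneg w_sum that by auto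
  have "(s ! (n - 1) - s ! 0) * (1 - w n) \<le> 1 - w n"
    "(s ! (n - 1) - s ! 0) * (1 - w 1) \<le> 1 - w 1"
    using spread weights_le[of n] weights_le[of 1] \<open>n \<ge> 1\<close>
    by (auto intro: mult_left_le_one_le)
  then show "x i - owa n w x \<le> 1 - w n" and "owa n w x - x i \<le> 1 - w 1"
    using sorted_weighted_sum_bounds[OF \<open>sorted s\<close> len assms(1-3)] x_between owa_s
    by linarith+
qed

lemma owa_step_profile:
  assumes "k \<le> n"
  shows "owa n w (\<lambda>i. if i < k then 0 else 1) = (\<Sum>j=k+1..n. w j)"
proof -
  have "map (\<lambda>i. if i < k then 0 else 1) [0..<n] = replicate k 0 @ replicate (n - k) (1::real)"
    using assms by (intro nth_equalityI) (auto simp: nth_append)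
  moreover have "sorted (replicate k 0 @ replicate (n - k) (1::real))"
    by (simp add: sorted_append)
  ultimately have sorted_profile: "sort (map (\<lambda>i. if i < k then 0 else 1) [0..<n])
      = replicate k 0 @ replicate (n - k) (1::real)"
    by (simp add: sorted_sort_id)
  have "owa n w (\<lambda>i. if i < k then 0 else 1)
      = (\<Sum>j=1..n. w j * (if j \<le> k then 0 else 1))"
    unfolding owa_def sorted_profile using assms by (intro sum.cong) (auto simp: nth_append)
  also have "\<dots> = (\<Sum>j=k+1..n. w j)"
    by (rule sum.mono_neutral_cong_right) auto
  finally show ?thesis .
qed

lemma IFS_owa_if_extreme_weights:
  assumes "n \<ge> 1"
    and "\<And>j. j \<in> {1..n} \<Longrightarrow> 0 \<le> w j" "(\<Sum>j=1..n. w j) = 1"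
    and "w 1 \<ge> 1 / real n" "w n \<ge> 1 / real n"
  shows "IFS n (owa n w)"
  unfolding IFS_def
proof (intro allI impI)
  fix x :: "nat \<Rightarrow> real" and i
  assume "\<forall>i<n. x i \<in> {0..1}" "i < n"
  then have "x i - owa n w x \<le> 1 - w n" "owa n w x - x i \<le> 1 - w 1"
    using owa_deviation_bounds[of n w x i] assms(1-3) by auto
  then show "\<bar>x i - owa n w x\<bar> \<le> 1 - 1 / real n"
    using assms(4,5) by linarith
qed

lemma extreme_weights_if_IFS_owa:
  assumes "n \<ge> 2" "(\<Sum>j=1..n. w j) = 1" and IFS: "IFS n (owa n w)"
  shows "w 1 \<ge> 1 / real n" and "w n \<ge> 1 / real n"
proof -
  have fair: "\<bar>x i - owa n w x\<bar> \<le> 1 - 1 / real n" if "\<forall>i<n. x i \<in> {0..1}" "i < n" for x i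
    using IFS that unfolding IFS_def by blast
  let ?alone_at_0 = "\<lambda>i. if i < 1 then 0 else 1 :: real"
  let ?alone_at_1 = "\<lambda>i. if i < n - 1 then 0 else 1 :: real"
  have "owa n w ?alone_at_0 = 1 - w 1"
    using owa_step_profile[of 1 n w] sum.atLeast_Suc_atMost[of 1 n w] assms(1,2) by simp
  then have "\<bar>0 - (1 - w 1)\<bar> \<le> 1 - 1 / real n"
    using fair[of ?alone_at_0 0] assms(1) by simp
  then show "w 1 \<ge> 1 / real n"
    by linarith
  have "owa n w ?alone_at_1 = w n"
    using owa_step_profile[of "n - 1" n w] assms(1) by simp
  then have "\<bar>1 - w n\<bar> \<le> 1 - 1 / real n"
    using fair[of ?alone_at_1 "n - 1"] assms(1) by simp
  then show "w n \<ge> 1 / real n"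
    by linarith
qed

theorem theorem3:
  fixes n :: nat and w :: "nat \<Rightarrow> real"
  assumes "n \<ge> 1"
    and "\<And>j. j \<in> {1..n} \<Longrightarrow> w j \<in> {0..1}"
    and "(\<Sum>j=1..n. w j) = 1"
  shows "IFS n (owa n w) \<longleftrightarrow> (w 1 \<ge> 1 / real n \<and> w n \<ge> 1 / real n)"
proof
  assume "IFS n (owa n w)"
  show "w 1 \<ge> 1 / real n \<and> w n \<ge> 1 / real n"
  proof (cases "n = 1")
    case True
    then show ?thesis
      using assms(3) by simp
  next
    case False
    then show ?thesis
      using extreme_weights_if_IFS_owa[of n w] assms(1,3) \<open>IFS n (owa n w)\<close> by simp
  qed
next
  assume "w 1 \<ge> 1 / real n \<and> w n \<ge> 1 / real n"
  then show "IFS n (owa n w)"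
    using IFS_owa_if_extreme_weights[of n w] assms by auto
qed

end
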